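(* Let $\lambda>0$ and let $f$ be analytic in $\mathbb{D}=\{z:|z|<1\}$ with $f(0)=0$, $f'(0)=1$. If \[|z^2f''(z)+zf'(z)-f(z)|\le3\lambda\qquad(z\in\mathbb{D}),\] then $f\in\Omega_\lambda$. The number $3\lambda$ is best possible.
   Context: $\Omega_\lambda$ denotes the set of functions $f$ analytic in $\mathbb{D}$ with $f(0)=0$, $f'(0)=1$, such that $zf'(z)-f(z)=\lambda z^2\phi(z)$ for some analytic $\phi$ on $\mathbb{D}$ with $|\phi(z)|\le1$. *)

theory Defs
  imports "HOL-Complex_Analysis.Complex_Analysis"
begin

definition normalized_analytic :: "(complex \<Rightarrow> complex) \<Rightarrow> bool" where
  "normalized_analytic f \<longleftrightarrow>
     f holomorphic_on ball 0 1 \<and> f 0 = 0 \<and> deriv f 0 = 1"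

definition Omega :: "real \<Rightarrow> (complex \<Rightarrow> complex) set" where
  "Omega lam = {f. normalized_analytic f \<and>
     (\<exists>\<phi>. \<phi> holomorphic_on ball 0 1 \<and> (\<forall>z\<in>ball 0 1. norm (\<phi> z) \<le> 1) \<and>
        (\<forall>z\<in>ball 0 1. z * deriv f z - f z = complex_of_real lam * z\<^sup>2 * \<phi> z))}"

end

theory Submission
  imports Defs
begin

text \<open>With \<open>g = z f' - f\<close> the operator in the hypothesis is
  \<open>H = z\<^sup>2 f'' + z f' - f = (z g)'\<close>. Since \<open>H\<close> vanishes to second order at \<open>0\<close>, the Schwarz
  lemma improves \<open>|H| \<le> 3\<lambda>\<close> to \<open>|H(z)| \<le> 3\<lambda>|z|\<^sup>2\<close>; integrating along the radius gives
  \<open>|z g(z)| \<le> \<lambda>|z|\<^sup>3\<close>, and dividing the double zero of \<open>g\<close> out yields \<open>g = \<lambda> z\<^sup>2 \<phi>\<close> with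
  \<open>|\<phi>| \<le> 1\<close>. For sharpness, \<open>f = z + (c/3) z\<^sup>2\<close> has \<open>H = c z\<^sup>2\<close> but \<open>z f' - f = (c/3) z\<^sup>2\<close>,
  which would force \<open>|\<phi>| = c/(3\<lambda>) > 1\<close>.\<close>

lemma Schwarz_Lemma_bound:
  fixes f :: "complex \<Rightarrow> complex"
  assumes holf: "f holomorphic_on ball 0 1" and f0: "f 0 = 0" and M: "M > 0"
    and bound: "\<And>z. z \<in> ball 0 1 \<Longrightarrow> norm (f z) \<le> M" and \<xi>: "norm \<xi> < 1"
  shows "norm (f \<xi>) \<le> M * norm \<xi>"
proof -
  define u where "u z = f z / of_real M" for z
  have holu: "u holomorphic_on ball 0 1"
    unfolding u_def using holf M by (auto intro!: holomorphic_intros)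
  have u_le: "norm (u z) \<le> 1" if "z \<in> ball 0 1" for z
    using bound[OF that] M by (simp add: u_def norm_divide)
  have u_less: "norm (u z) < 1" if z: "norm z < 1" for z
  proof (rule ccontr)
    assume "\<not> norm (u z) < 1"
    with u_le z have eq: "norm (u z) = 1" by force
    have "u constant_on ball 0 1"
      by (rule maximum_modulus_principle[OF holu, of "ball 0 1" z]) (use z eq u_le in auto)
    then have "u z = u 0" using z by (auto simp: constant_on_def)
    with eq f0 M show False by (simp add: u_def)
  qed
  have "norm (u \<xi>) \<le> norm \<xi>"
    by (rule Schwarz_Lemma(1)[OF holu _ u_less \<xi>]) (simp add: u_def f0)
  then show ?thesis using M by (simp add: u_def norm_divide field_simps)
qed

lemma Schwarz_Lemma_bound_order2:
  fixes f :: "complex \<Rightarrow> complex"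
  assumes holf: "f holomorphic_on ball 0 1" and f0: "f 0 = 0" and f'0: "deriv f 0 = 0"
    and M: "M > 0" and bound: "\<And>z. z \<in> ball 0 1 \<Longrightarrow> norm (f z) \<le> M" and \<xi>: "norm \<xi> < 1"
  shows "norm (f \<xi>) \<le> M * norm \<xi> ^ 2"
proof -
  obtain k where holk: "k holomorphic_on ball 0 1" and fk: "\<And>z. norm z < 1 \<Longrightarrow> f z = z * k z"
    and k0: "k 0 = 0"
    using Schwarz3[OF holf f0] f'0 by metis
  have k_le: "norm (k z) \<le> M" if "z \<in> ball 0 1" for z
  proof (cases "z = 0")
    case False
    have "norm z * norm (k z) \<le> M * norm z"
      using Schwarz_Lemma_bound[OF holf f0 M bound] fk that by (simp add: norm_mult)
    with False show ?thesis by simp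
  qed (use k0 M in simp)
  have "norm \<xi> * norm (k \<xi>) \<le> norm \<xi> * (M * norm \<xi>)"
    using Schwarz_Lemma_bound[OF holk k0 M k_le \<xi>] by (simp add: mult_left_mono)
  then show ?thesis using fk[OF \<xi>] by (simp add: norm_mult power2_eq_square algebra_simps)
qed

lemma holomorphic_factor_double_zero:
  fixes g :: "complex \<Rightarrow> complex"
  assumes holg: "g holomorphic_on ball 0 r" and g0: "g 0 = 0" and g'0: "deriv g 0 = 0"
  obtains p where "p holomorphic_on ball 0 r" "\<And>z. norm z < r \<Longrightarrow> g z = z\<^sup>2 * p z"
proof -
  obtain k where holk: "k holomorphic_on ball 0 r" and gk: "\<And>z. norm z < r \<Longrightarrow> g z = z * k z"
    and k0: "k 0 = 0"
    using Schwarz3[OF holg g0] g'0 by metis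
  obtain p where "p holomorphic_on ball 0 r" and kp: "\<And>z. norm z < r \<Longrightarrow> k z = z * p z"
    using Schwarz3[OF holk k0] by blast
  then show ?thesis using that gk by (simp add: power2_eq_square)
qed

lemma norm_le_at_if_eventually_norm_le:
  fixes p :: "'a::{perfect_space, t2_space} \<Rightarrow> 'b::real_normed_vector"
  assumes "isCont p a" and "eventually (\<lambda>w. norm (p w) \<le> B) (at a)"
  shows "norm (p a) \<le> B"
  using assms by (intro Lim_norm_ubound[of "at a" p]) (auto simp: isCont_def)

lemma Re_cnj_sgn_mult: "Re (cnj (sgn w) * w) = norm (w :: complex)"
proof -
  have "cnj (sgn w) * w = of_real (norm w ^ 2) / of_real (norm w)"
    by (simp add: sgn_eq mult.commute flip: complex_norm_square)
  then show ?thesis by (simp add: power2_eq_square)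
qed

text \<open>The radial estimate is proved by the monotonicity of
  \<open>t \<mapsto> Re (cnj c * h (t z)) - C |z|\<^sup>n\<^sup>+\<^sup>1 t\<^sup>n\<^sup>+\<^sup>1 / (n+1)\<close> on \<open>[0, 1]\<close>, where \<open>c = sgn (h z)\<close>
  rotates the value \<open>h z\<close> onto the positive axis.\<close>

lemma norm_le_of_norm_deriv_le_power:
  fixes h :: "complex \<Rightarrow> complex"
  assumes holh: "h holomorphic_on ball 0 1" and h0: "h 0 = 0"
    and deriv_le: "\<And>w. w \<in> ball 0 1 \<Longrightarrow> norm (deriv h w) \<le> C * norm w ^ n"
    and z: "z \<in> ball 0 1"
  shows "norm (h z) \<le> C * norm z ^ Suc n / Suc n"
proof -
  define c where "c = sgn (h z)"
  define v where "v t = Re (cnj c * h (of_real t * z)) - C * norm z ^ Suc n * t ^ Suc n / Suc n"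
    for t :: real
  have seg: "of_real t * z \<in> ball 0 1" if "0 \<le> t" "t \<le> 1" for t :: real
    using z that mult_left_le_one_le[of "norm z" t] by (simp add: norm_mult)
  have "v 1 \<le> v 0"
  proof (rule DERIV_nonpos_imp_nonincreasing[of 0 1])
    fix t :: real assume t: "0 \<le> t" "t \<le> 1"
    define w where "w = of_real t * z"
    have "(h has_field_derivative deriv h w) (at w)"
      using holomorphic_derivI[OF holh _ seg[OF t]] by (simp add: w_def)
    then have "((\<lambda>s. cnj c * h (s * z)) has_field_derivative cnj c * (deriv h w * z)) (at (of_real t))"
      by (auto intro!: derivative_eq_intros DERIV_chain2[where f = h] simp: w_def)
    from has_field_derivative_Re[OF has_vector_derivative_real_field[OF this]]
    have Re': "((\<lambda>t. Re (cnj c * h (of_real t * z))) has_real_derivative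
                 Re (cnj c * (deriv h w * z))) (at t)"
      by simp
    have "((\<lambda>t. t ^ Suc n) has_real_derivative Suc n * t ^ n) (at t)"
      using DERIV_pow[of "Suc n" t] by simp
    then have "((\<lambda>t. C * norm z ^ Suc n * t ^ Suc n / Suc n) has_real_derivative
            C * norm z ^ Suc n * (Suc n * t ^ n) / Suc n) (at t)"
      by (intro DERIV_cdivide DERIV_cmult)
    then have "((\<lambda>t. C * norm z ^ Suc n * t ^ Suc n / Suc n) has_real_derivative
            C * norm z ^ Suc n * t ^ n) (at t)"
      by (simp add: mult_ac)
    from DERIV_diff[OF Re' this]
    have "(v has_real_derivative Re (cnj c * (deriv h w * z)) - C * norm z ^ Suc n * t ^ n) (at t)"
      unfolding v_def .
    moreover have "Re (cnj c * (deriv h w * z)) \<le> C * norm z ^ Suc n * t ^ n"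
    proof -
      have "Re (cnj c * (deriv h w * z)) \<le> norm c * (norm (deriv h w) * norm z)"
        using complex_Re_le_cmod by (metis complex_mod_cnj norm_mult)
      also have "\<dots> \<le> norm (deriv h w) * norm z"
        by (simp add: c_def norm_sgn mult_left_le_one_le)
      also have "\<dots> \<le> C * norm w ^ n * norm z"
        using deriv_le[OF seg[OF t]] by (simp add: w_def mult_right_mono)
      also have "\<dots> = C * norm z ^ Suc n * t ^ n"
        using t by (simp add: w_def norm_mult power_mult_distrib)
      finally show ?thesis .
    qed
    ultimately show "\<exists>y. (v has_real_derivative y) (at t) \<and> y \<le> 0" by auto
  qed simp
  moreover have "v 0 = 0" by (simp add: v_def h0)
  moreover have "v 1 = norm (h z) - C * norm z ^ Suc n / Suc n"
    using Re_cnj_sgn_mult[of "h z"] by (simp add: v_def c_def)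
  ultimately show ?thesis by simp
qed

lemma has_field_derivative_z_deriv_minus:
  fixes f :: "complex \<Rightarrow> complex"
  assumes "f holomorphic_on S" "open S" "z \<in> S"
  shows "((\<lambda>w. w * deriv f w - f w) has_field_derivative z * deriv (deriv f) z) (at z)"
proof -
  have "deriv f holomorphic_on S" using assms holomorphic_deriv by blast
  then show ?thesis
    using holomorphic_derivI[OF assms] holomorphic_derivI[of "deriv f" S z] assms
    by (auto intro!: derivative_eq_intros)
qed

lemma Omega_if_norm_le:
  fixes f :: "complex \<Rightarrow> complex"
  assumes lam: "lam > 0" and nf: "normalized_analytic f"
    and bound: "\<And>z. z \<in> ball 0 1 \<Longrightarrow> norm (z * deriv f z - f z) \<le> lam * norm z ^ 2"
  shows "f \<in> Omega lam"
proof -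
  define g where "g z = z * deriv f z - f z" for z
  have holf: "f holomorphic_on ball 0 1" and f0: "f 0 = 0"
    using nf by (auto simp: normalized_analytic_def)
  have holg: "g holomorphic_on ball 0 1"
    unfolding g_def using holf by (intro holomorphic_intros holomorphic_deriv) auto
  have "deriv g 0 = 0"
    unfolding g_def[abs_def]
    using DERIV_imp_deriv[OF has_field_derivative_z_deriv_minus[OF holf]] by simp
  then obtain p where holp: "p holomorphic_on ball 0 1"
    and gp: "\<And>z. norm z < 1 \<Longrightarrow> g z = z\<^sup>2 * p z"
    using holomorphic_factor_double_zero[OF holg] f0 by (auto simp: g_def)
  have p_le_punctured: "norm (p z) \<le> lam" if "z \<in> ball 0 1" "z \<noteq> 0" for z
    using bound[OF that(1)] gp[of z] that by (simp add: g_def norm_mult norm_power)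
  have p_le: "norm (p z) \<le> lam" if z: "z \<in> ball 0 1" for z
  proof (cases "z = 0")
    case True
    have "eventually (\<lambda>w. w \<in> ball 0 1) (at (0::complex))"
      by (intro eventually_at_in_open') auto
    moreover have "eventually (\<lambda>w. w \<noteq> 0) (at (0::complex))"
      by (simp add: eventually_at_filter)
    ultimately have "eventually (\<lambda>w. norm (p w) \<le> lam) (at 0)"
      by eventually_elim (use p_le_punctured in auto)
    moreover have "isCont p 0"
      using holp holomorphic_on_imp_continuous_on continuous_on_interior interior_ball
      by (metis centre_in_ball zero_less_one)
    ultimately show ?thesis using True norm_le_at_if_eventually_norm_le by blast
  qed (use p_le_punctured z in blast)
  show ?thesis unfolding Omega_def
  proof (intro CollectI conjI exI[of _ "\<lambda>z. p z / of_real lam"] ballI nf)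
    show "(\<lambda>z. p z / of_real lam) holomorphic_on ball 0 1"
      using holp lam by (auto intro!: holomorphic_intros)
    fix z :: complex assume "z \<in> ball 0 1"
    then show "norm (p z / of_real lam) \<le> 1"
      and "z * deriv f z - f z = of_real lam * z\<^sup>2 * (p z / of_real lam)"
      using p_le gp[of z] lam by (auto simp: g_def norm_divide)
  qed
qed

lemma Omega_if_norm_operator_le:
  fixes f :: "complex \<Rightarrow> complex"
  assumes lam: "lam > 0" and nf: "normalized_analytic f"
    and bound: "\<forall>z\<in>ball 0 1. norm (z\<^sup>2 * deriv (deriv f) z + z * deriv f z - f z) \<le> 3 * lam"
  shows "f \<in> Omega lam"
proof -
  define g where "g z = z * deriv f z - f z" for z
  define H where "H z = z\<^sup>2 * deriv (deriv f) z + g z" for z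
  have holf: "f holomorphic_on ball 0 1" and f0: "f 0 = 0"
    using nf by (auto simp: normalized_analytic_def)
  have holf'': "deriv (deriv f) holomorphic_on ball 0 1"
    using holf by (intro holomorphic_deriv) auto
  have g': "(g has_field_derivative z * deriv (deriv f) z) (at z)" if "z \<in> ball 0 1" for z
    unfolding g_def[abs_def] using has_field_derivative_z_deriv_minus[OF holf _ that] by simp
  have zg': "((\<lambda>w. w * g w) has_field_derivative H z) (at z)" if "z \<in> ball 0 1" for z
    using g'[OF that] by (auto intro!: derivative_eq_intros simp: H_def power2_eq_square)
  have holg: "g holomorphic_on ball 0 1"
    unfolding g_def using holf by (intro holomorphic_intros holomorphic_deriv) auto
  have holH: "H holomorphic_on ball 0 1"
    unfolding H_def using holf holf'' holg by (auto intro!: holomorphic_intros)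
  have "((\<lambda>z. z\<^sup>2 * deriv (deriv f) z) has_field_derivative 0) (at 0)"
    using holomorphic_derivI[OF holf'', of 0] by (auto intro!: derivative_eq_intros)
  moreover have "(g has_field_derivative 0) (at 0)"
    using g'[of 0] by simp
  ultimately have H'0: "deriv H 0 = 0"
    unfolding H_def[abs_def] by (intro DERIV_imp_deriv) (use DERIV_add in fastforce)
  have H_le: "norm (H z) \<le> 3 * lam * norm z ^ 2" if "z \<in> ball 0 1" for z
    using Schwarz_Lemma_bound_order2[OF holH _ H'0, of "3 * lam"] bound that lam f0
    by (auto simp: H_def g_def add_diff_eq)
  have zg_le: "norm (z * g z) \<le> lam * norm z ^ 3" if "z \<in> ball 0 1" for z
  proof -
    have "norm (z * g z) \<le> 3 * lam * norm z ^ Suc 2 / Suc 2"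
      by (rule norm_le_of_norm_deriv_le_power[of "\<lambda>w. w * g w"])
         (use holg that H_le DERIV_imp_deriv[OF zg'] in \<open>auto intro!: holomorphic_intros\<close>)
    then show ?thesis by simp
  qed
  have "norm (g z) \<le> lam * norm z ^ 2" if "z \<in> ball 0 1" for z
    using zg_le[OF that] f0 by (cases "z = 0") (auto simp: g_def norm_mult power_def)
  then show ?thesis using Omega_if_norm_le[OF lam nf] by (simp add: g_def)
qed

lemma deriv_quadratic:
  fixes a :: complex
  shows "deriv (\<lambda>z. z + a * z\<^sup>2) = (\<lambda>z. 1 + 2 * a * z)"
    and "deriv (deriv (\<lambda>z. z + a * z\<^sup>2)) = (\<lambda>z. 2 * a)"
proof -
  show first: "deriv (\<lambda>z. z + a * z\<^sup>2) = (\<lambda>z. 1 + 2 * a * z)"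
    by (intro ext DERIV_imp_deriv) (auto intro!: derivative_eq_intros)
  show "deriv (deriv (\<lambda>z. z + a * z\<^sup>2)) = (\<lambda>z. 2 * a)"
    unfolding first by (intro ext DERIV_imp_deriv) (auto intro!: derivative_eq_intros)
qed

lemma operator_quadratic:
  fixes a :: complex
  shows "z\<^sup>2 * deriv (deriv (\<lambda>z. z + a * z\<^sup>2)) z + z * deriv (\<lambda>z. z + a * z\<^sup>2) z
           - (z + a * z\<^sup>2) = 3 * a * z\<^sup>2"
  unfolding deriv_quadratic(2) unfolding deriv_quadratic(1)
  by (simp add: algebra_simps power2_eq_square)

lemma normalized_analytic_quadratic: "normalized_analytic (\<lambda>z. z + a * z\<^sup>2)"
  unfolding normalized_analytic_def deriv_quadratic by (auto intro!: holomorphic_intros)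

lemma quadratic_not_in_Omega:
  fixes a :: complex
  assumes "\<bar>lam\<bar> < norm a"
  shows "(\<lambda>z. z + a * z\<^sup>2) \<notin> Omega lam"
proof
  assume "(\<lambda>z. z + a * z\<^sup>2) \<in> Omega lam"
  then obtain \<phi> where \<phi>_le: "\<forall>z\<in>ball 0 1. norm (\<phi> z) \<le> 1"
    and eq: "\<forall>z\<in>ball 0 1. z * (1 + 2 * a * z) - (z + a * z\<^sup>2) = of_real lam * z\<^sup>2 * \<phi> z"
    by (auto simp: Omega_def deriv_quadratic)
  define z :: complex where "z = 1/2"
  have z: "z \<in> ball 0 1" by (simp add: z_def)
  then have "a * z\<^sup>2 = of_real lam * z\<^sup>2 * \<phi> z"
    using eq by (simp add: algebra_simps power2_eq_square)
  then have "a = of_real lam * \<phi> z"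
    by (simp add: z_def)
  then have "norm a \<le> \<bar>lam\<bar>"
    using \<phi>_le z by (simp add: norm_mult mult_left_le)
  with assms show False by simp
qed

theorem theorem4p4:
  fixes lam :: real
  assumes "lam > 0"
  shows "(\<forall>f. normalized_analytic f \<longrightarrow>
            (\<forall>z\<in>ball 0 1. norm (z\<^sup>2 * deriv (deriv f) z + z * deriv f z - f z) \<le> 3 * lam)
            \<longrightarrow> f \<in> Omega lam)
       \<and> (\<forall>c > 3 * lam. \<exists>f. normalized_analytic f \<and>
            (\<forall>z\<in>ball 0 1. norm (z\<^sup>2 * deriv (deriv f) z + z * deriv f z - f z) \<le> c) \<and>
            f \<notin> Omega lam)"
proof (intro conjI allI impI)
  show "f \<in> Omega lam"
    if "normalized_analytic f"
      and "\<forall>z\<in>ball 0 1. norm (z\<^sup>2 * deriv (deriv f) z + z * deriv f z - f z) \<le> 3 * lam" for f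
    using Omega_if_norm_operator_le[OF assms that] .
next
  fix c :: real assume c: "c > 3 * lam"
  let ?f = "\<lambda>z. z + of_real (c / 3) * z\<^sup>2"
  have bound: "norm (3 * of_real (c / 3) * z\<^sup>2) \<le> c" if "z \<in> ball 0 1" for z :: complex
    using that c assms by (simp add: norm_mult norm_power power_le_one mult_left_le)
  show "\<exists>f. normalized_analytic f \<and>
            (\<forall>z\<in>ball 0 1. norm (z\<^sup>2 * deriv (deriv f) z + z * deriv f z - f z) \<le> c) \<and>
            f \<notin> Omega lam"
  proof (intro exI[of _ ?f] conjI ballI normalized_analytic_quadratic)
    show "?f \<notin> Omega lam"
      using c assms by (intro quadratic_not_in_Omega) simp
  qed (unfold operator_quadratic, rule bound)
qed

end
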